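(* Let $c_1>0$, $c_2>0$ and $k\in\mathbb{R}\setminus\{0\}$, and consider the system on $\mathbb{R}^3$ $$\dot z_1=\frac1{c_2}z_2z_3,\qquad \dot z_2=-\frac1{c_1}z_1z_3,\qquad \dot z_3=-\frac{k}{c_1}z_1 .$$ Let $$\Pi(z_1,z_2,z_3)=\begin{pmatrix}0&-\frac1kz_3&-1\\ \frac1kz_3&0&0\\ 1&0&0\end{pmatrix},\qquad \widetilde H(z)=-\frac{k}{2c_1}\Big(z_1^2+\frac{c_1}{c_2}z_2^2\Big),\qquad \widetilde C(z)=z_2-\frac1{2k}z_3^2 .$$ Then the system has the Hamilton-Poisson realization $(\mathbb{R}^3,\Pi,\widetilde H)$ with Casimir $\widetilde C$; that is, $\Pi$ defines a Poisson bracket $\{f,g\}=(\nabla f)^T\Pi\nabla g$ on $\mathbb{R}^3$, the system reads $\dot z=\Pi(z)\nabla\widetilde H(z)$, and $\{\widetilde C,f\}=0$ for all $f\in C^\infty(\mathbb{R}^3,\mathbb{R})$. *)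

theory Defs
  imports "HOL-Analysis.Analysis"
begin

definition partial :: "3 \<Rightarrow> (real^3 \<Rightarrow> real) \<Rightarrow> real^3 \<Rightarrow> real" where
  "partial i f z = frechet_derivative f (at z) (axis i 1)"

definition grad :: "(real^3 \<Rightarrow> real) \<Rightarrow> real^3 \<Rightarrow> real^3" where
  "grad f z = (\<chi> i. partial i f z)"

fun Ck :: "nat \<Rightarrow> (real^3 \<Rightarrow> real) \<Rightarrow> bool" where
  "Ck 0 f = continuous_on UNIV f"
| "Ck (Suc n) f = ((\<forall>z. f differentiable (at z)) \<and> (\<forall>i. Ck n (partial i f)))"

definition smooth :: "(real^3 \<Rightarrow> real) \<Rightarrow> bool" where
  "smooth f \<longleftrightarrow> (\<forall>n. Ck n f)"

definition bracket :: "(real^3 \<Rightarrow> real^3^3) \<Rightarrow> (real^3 \<Rightarrow> real) \<Rightarrow> (real^3 \<Rightarrow> real) \<Rightarrow> real^3 \<Rightarrow> real" where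
  "bracket P f g z = grad f z \<bullet> (P z *v grad g z)"

definition defines_poisson_bracket :: "(real^3 \<Rightarrow> real^3^3) \<Rightarrow> bool" where
  "defines_poisson_bracket P \<longleftrightarrow>
    (\<forall>f g h a b. smooth f \<and> smooth g \<and> smooth h \<longrightarrow>
       smooth (bracket P f g)
     \<and> bracket P (\<lambda>z. a * f z + b * g z) h = (\<lambda>z. a * bracket P f h z + b * bracket P g h z)
     \<and> bracket P f (\<lambda>z. a * g z + b * h z) = (\<lambda>z. a * bracket P f g z + b * bracket P f h z)
     \<and> bracket P f g = (\<lambda>z. - bracket P g f z)
     \<and> bracket P f (\<lambda>z. g z * h z) = (\<lambda>z. bracket P f g z * h z + g z * bracket P f h z)
     \<and> (\<forall>z. bracket P f (bracket P g h) z + bracket P g (bracket P h f) z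
              + bracket P h (bracket P f g) z = 0))"

definition sysF :: "real \<Rightarrow> real \<Rightarrow> real \<Rightarrow> real^3 \<Rightarrow> real^3" where
  "sysF c1 c2 k z = vector [(1/c2) * z$2 * z$3, -(1/c1) * z$1 * z$3, -(k/c1) * z$1]"

definition PiM :: "real \<Rightarrow> real^3 \<Rightarrow> real^3^3" where
  "PiM k z = vector [vector [0, -(1/k) * z$3, -1],
                     vector [(1/k) * z$3, 0, 0],
                     vector [1, 0, 0]]"

definition Htil :: "real \<Rightarrow> real \<Rightarrow> real \<Rightarrow> real^3 \<Rightarrow> real" where
  "Htil c1 c2 k z = -(k / (2*c1)) * ((z$1)^2 + (c1/c2) * (z$2)^2)"

definition Ctil :: "real \<Rightarrow> real^3 \<Rightarrow> real" where
  "Ctil k z = z$2 - (1/(2*k)) * (z$3)^2"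

end

theory Submission
  imports Defs
begin

text \<open>Everything except the Jacobi identity is a direct computation with the explicit matrix
  \<open>PiM k\<close>. For the Jacobi identity, expand \<open>{f,{g,h}}\<close> in coordinates. Once mixed partials
  are identified (Schwarz's theorem, obtained here from a double mean value argument), the
  second-order terms cancel in the cyclic sum; the only first-order term, from differentiating
  the entry \<open>z$3/k\<close>, is \<open>-f\<^sub>1 (g\<^sub>2 h\<^sub>1 - g\<^sub>1 h\<^sub>2) / k\<close>, whose cyclic sum vanishes.\<close>

lemma partial_eq_derivative:
  assumes "(f has_derivative f') (at z)"
  shows "partial i f z = f' (axis i 1)"
  using assms unfolding partial_def by (metis frechet_derivative_at)

lemma partial_add:
  assumes "f differentiable (at z)" "g differentiable (at z)"
  shows "partial i (\<lambda>z. f z + g z) z = partial i f z + partial i g z"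
  using assms
  by (intro partial_eq_derivative[THEN trans])
     (auto intro!: derivative_eq_intros frechet_derivative_works[THEN iffD1] simp: partial_def)

lemma partial_diff:
  assumes "f differentiable (at z)" "g differentiable (at z)"
  shows "partial i (\<lambda>z. f z - g z) z = partial i f z - partial i g z"
  using assms
  by (intro partial_eq_derivative[THEN trans])
     (auto intro!: derivative_eq_intros frechet_derivative_works[THEN iffD1] simp: partial_def)

lemma partial_cmult:
  assumes "f differentiable (at z)"
  shows "partial i (\<lambda>z. c * f z) z = c * partial i f z"
  using assms
  by (intro partial_eq_derivative[THEN trans])
     (auto intro!: derivative_eq_intros frechet_derivative_works[THEN iffD1] simp: partial_def)

lemma partial_mult:
  assumes "f differentiable (at z)" "g differentiable (at z)"
  shows "partial i (\<lambda>z. f z * g z) z = partial i f z * g z + f z * partial i g z"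
  using assms
  by (intro partial_eq_derivative[THEN trans])
     (auto intro!: derivative_eq_intros frechet_derivative_works[THEN iffD1] simp: partial_def)

lemma partial_const: "partial i (\<lambda>z. c) z = 0"
  by (rule partial_eq_derivative[THEN trans]) (auto intro!: derivative_eq_intros)

lemma has_derivative_vec_nth_at: "((\<lambda>z::real^3. z$j) has_derivative (\<lambda>h. h$j)) (at z)"
  using bounded_linear_vec_nth bounded_linear_imp_has_derivative by blast

lemma partial_vec_nth: "partial i (\<lambda>z. z$j) z = (if j = i then 1 else 0)"
  by (rule partial_eq_derivative[OF has_derivative_vec_nth_at, THEN trans]) (simp add: axis_def)

subsection \<open>Equality of mixed partial derivatives\<close>

lemma has_real_derivative_along_line:
  assumes "\<forall>x. f differentiable (at x)"
  shows "((\<lambda>u. f (a + u *\<^sub>R axis i 1)) has_real_derivative partial i f (a + u *\<^sub>R axis i 1)) (at u)"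
proof -
  let ?F = "frechet_derivative f (at (a + u *\<^sub>R axis i 1))"
  have df: "(f has_derivative ?F) (at (a + u *\<^sub>R axis i 1))"
    using assms frechet_derivative_works by blast
  have "((\<lambda>u. a + u *\<^sub>R axis i 1) has_derivative (\<lambda>h. h *\<^sub>R axis i 1)) (at u)"
    by (auto intro!: derivative_eq_intros)
  from has_derivative_compose[OF this df]
  have "((\<lambda>u. f (a + u *\<^sub>R axis i 1)) has_derivative (\<lambda>h. ?F (h *\<^sub>R axis i 1))) (at u)" .
  moreover have "(\<lambda>h. ?F (h *\<^sub>R axis i 1)) = (*) (?F (axis i 1))"
    by (auto simp: linear_scale[OF has_derivative_linear[OF df]] mult.commute)
  ultimately show ?thesis
    unfolding has_field_derivative_def partial_def by simp
qed

lemma second_difference_mean_value: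
  fixes f :: "real^3 \<Rightarrow> real"
  assumes df: "\<forall>x. f differentiable (at x)" and dpf: "\<forall>x. partial i f differentiable (at x)"
    and "s > 0" "t > 0"
  obtains \<sigma> \<tau> where "0 < \<sigma>" "\<sigma> < s" "0 < \<tau>" "\<tau> < t"
    "f (z + s *\<^sub>R axis i 1 + t *\<^sub>R axis j 1) - f (z + s *\<^sub>R axis i 1) - f (z + t *\<^sub>R axis j 1) + f z
      = s * t * partial j (partial i f) (z + \<sigma> *\<^sub>R axis i 1 + \<tau> *\<^sub>R axis j 1)"
proof -
  define ei :: "real^3" where "ei = axis i 1"
  define ej :: "real^3" where "ej = axis j 1"
  define \<phi> where "\<phi> u = f ((z + t *\<^sub>R ej) + u *\<^sub>R ei) - f (z + u *\<^sub>R ei)" for u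
  have "(\<phi> has_real_derivative
      (partial i f ((z + t *\<^sub>R ej) + u *\<^sub>R ei) - partial i f (z + u *\<^sub>R ei))) (at u)" for u
    unfolding \<phi>_def ei_def by (auto intro!: DERIV_diff has_real_derivative_along_line df)
  from MVT2[OF \<open>s > 0\<close> this] obtain \<sigma> where \<sigma>: "0 < \<sigma>" "\<sigma> < s"
    and \<phi>_mvt: "\<phi> s - \<phi> 0 = (s - 0) * (partial i f ((z + t *\<^sub>R ej) + \<sigma> *\<^sub>R ei) - partial i f (z + \<sigma> *\<^sub>R ei))"
    by blast
  define \<psi> where "\<psi> v = partial i f ((z + \<sigma> *\<^sub>R ei) + v *\<^sub>R ej)" for v
  have "(\<psi> has_real_derivative partial j (partial i f) ((z + \<sigma> *\<^sub>R ei) + v *\<^sub>R ej)) (at v)" for v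
    unfolding \<psi>_def ej_def by (auto intro!: has_real_derivative_along_line dpf)
  from MVT2[OF \<open>t > 0\<close> this] obtain \<tau> where \<tau>: "0 < \<tau>" "\<tau> < t"
    and \<psi>_mvt: "\<psi> t - \<psi> 0 = (t - 0) * partial j (partial i f) ((z + \<sigma> *\<^sub>R ei) + \<tau> *\<^sub>R ej)"
    by blast
  have "f (z + s *\<^sub>R ei + t *\<^sub>R ej) - f (z + s *\<^sub>R ei) - f (z + t *\<^sub>R ej) + f z = \<phi> s - \<phi> 0"
    unfolding \<phi>_def by (simp add: add_ac)
  also have "\<dots> = s * (\<psi> t - \<psi> 0)"
    using \<phi>_mvt unfolding \<psi>_def by (simp add: add_ac)
  also have "\<dots> = s * t * partial j (partial i f) (z + \<sigma> *\<^sub>R ei + \<tau> *\<^sub>R ej)"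
    using \<psi>_mvt by simp
  finally show ?thesis
    using that \<sigma> \<tau> unfolding ei_def ej_def by blast
qed

lemma dist_add_axes_less:
  fixes z :: "real^'n"
  assumes "0 < \<sigma>" "\<sigma> < h" "0 < \<tau>" "\<tau> < h"
  shows "dist (z + \<sigma> *\<^sub>R axis i 1 + \<tau> *\<^sub>R axis j 1) z < 2 * h"
proof -
  have "dist (z + \<sigma> *\<^sub>R axis i 1 + \<tau> *\<^sub>R axis j 1) z = norm (\<sigma> *\<^sub>R axis i 1 + \<tau> *\<^sub>R (axis j 1 :: real^'n))"
    by (simp add: dist_norm)
  also have "\<dots> \<le> norm (\<sigma> *\<^sub>R (axis i 1 :: real^'n)) + norm (\<tau> *\<^sub>R (axis j 1 :: real^'n))"
    by (rule norm_triangle_ineq)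
  also have "\<dots> < 2 * h"
    using assms by simp
  finally show ?thesis .
qed

lemma mixed_partials_meet_near:
  fixes f :: "real^3 \<Rightarrow> real"
  assumes "\<forall>x. f differentiable (at x)"
    and "\<forall>x. partial i f differentiable (at x)" "\<forall>x. partial j f differentiable (at x)"
    and "d > 0"
  obtains p q where "dist p z < d" "dist q z < d"
    "partial j (partial i f) p = partial i (partial j f) q"
proof -
  define h where "h = d / 2"
  have "h > 0" using \<open>d > 0\<close> by (simp add: h_def)
  obtain \<sigma> \<tau> where \<sigma>\<tau>: "0 < \<sigma>" "\<sigma> < h" "0 < \<tau>" "\<tau> < h" and
    ij: "f (z + h *\<^sub>R axis i 1 + h *\<^sub>R axis j 1) - f (z + h *\<^sub>R axis i 1) - f (z + h *\<^sub>R axis j 1) + f z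
      = h * h * partial j (partial i f) (z + \<sigma> *\<^sub>R axis i 1 + \<tau> *\<^sub>R axis j 1)"
    using second_difference_mean_value[OF assms(1,2) \<open>h > 0\<close> \<open>h > 0\<close>] by blast
  obtain \<sigma>' \<tau>' where \<sigma>'\<tau>': "0 < \<sigma>'" "\<sigma>' < h" "0 < \<tau>'" "\<tau>' < h" and
    ji: "f (z + h *\<^sub>R axis j 1 + h *\<^sub>R axis i 1) - f (z + h *\<^sub>R axis j 1) - f (z + h *\<^sub>R axis i 1) + f z
      = h * h * partial i (partial j f) (z + \<sigma>' *\<^sub>R axis j 1 + \<tau>' *\<^sub>R axis i 1)"
    using second_difference_mean_value[OF assms(1,3) \<open>h > 0\<close> \<open>h > 0\<close>] by blast
  have "f (z + h *\<^sub>R axis j 1 + h *\<^sub>R axis i 1) = f (z + h *\<^sub>R axis i 1 + h *\<^sub>R axis j 1)"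
    by (simp add: algebra_simps)
  with ij ji have "h * h * partial j (partial i f) (z + \<sigma> *\<^sub>R axis i 1 + \<tau> *\<^sub>R axis j 1)
      = h * h * partial i (partial j f) (z + \<sigma>' *\<^sub>R axis j 1 + \<tau>' *\<^sub>R axis i 1)"
    by linarith
  with \<open>h > 0\<close> have "partial j (partial i f) (z + \<sigma> *\<^sub>R axis i 1 + \<tau> *\<^sub>R axis j 1)
      = partial i (partial j f) (z + \<sigma>' *\<^sub>R axis j 1 + \<tau>' *\<^sub>R axis i 1)"
    by simp
  moreover have "dist (z + \<sigma> *\<^sub>R axis i 1 + \<tau> *\<^sub>R axis j 1) z < d"
    "dist (z + \<sigma>' *\<^sub>R axis j 1 + \<tau>' *\<^sub>R axis i 1) z < d"
    using dist_add_axes_less \<sigma>\<tau> \<sigma>'\<tau>' by (fastforce simp: h_def)+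
  ultimately show ?thesis using that by blast
qed

lemma isCont_eq_if_meet_near:
  fixes A B :: "'a::metric_space \<Rightarrow> 'b::metric_space"
  assumes "isCont A z" "isCont B z"
    and meet: "\<And>d. d > 0 \<Longrightarrow> \<exists>p q. dist p z < d \<and> dist q z < d \<and> A p = B q"
  shows "A z = B z"
proof (rule ccontr)
  assume "A z \<noteq> B z"
  define e where "e = dist (A z) (B z) / 2"
  have "e > 0" using \<open>A z \<noteq> B z\<close> by (simp add: e_def)
  obtain d1 where "d1 > 0" and d1: "\<And>x. dist x z < d1 \<Longrightarrow> dist (A x) (A z) < e"
    using assms(1) \<open>e > 0\<close> unfolding continuous_at_eps_delta by blast
  obtain d2 where "d2 > 0" and d2: "\<And>x. dist x z < d2 \<Longrightarrow> dist (B x) (B z) < e"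
    using assms(2) \<open>e > 0\<close> unfolding continuous_at_eps_delta by blast
  obtain p q where "dist p z < min d1 d2" "dist q z < min d1 d2" "A p = B q"
    using meet[of "min d1 d2"] \<open>d1 > 0\<close> \<open>d2 > 0\<close> by auto
  have "dist (A z) (B z) \<le> dist (A p) (A z) + dist (B q) (B z)"
    using dist_triangle3[of "A z" "B z" "A p"] \<open>A p = B q\<close> by simp
  also have "\<dots> < e + e"
    using d1 d2 \<open>dist p z < min d1 d2\<close> \<open>dist q z < min d1 d2\<close> by (intro add_strict_mono) auto
  finally show False by (simp add: e_def)
qed

lemma partial_commute:
  fixes f :: "real^3 \<Rightarrow> real"
  assumes "\<forall>x. f differentiable (at x)"
    and "\<forall>x. partial i f differentiable (at x)" "\<forall>x. partial j f differentiable (at x)"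
    and "continuous_on UNIV (partial j (partial i f))" "continuous_on UNIV (partial i (partial j f))"
  shows "partial j (partial i f) z = partial i (partial j f) z"
proof (rule isCont_eq_if_meet_near[where A = "partial j (partial i f)" and B = "partial i (partial j f)"])
  show "isCont (partial j (partial i f)) z" "isCont (partial i (partial j f)) z"
    using assms(4,5) by (simp_all add: continuous_on_eq_continuous_at)
  show "\<exists>p q. dist p z < d \<and> dist q z < d \<and> partial j (partial i f) p = partial i (partial j f) q"
    if "d > 0" for d
    using mixed_partials_meet_near[OF assms(1-3) that] by blast
qed

lemma Ck_Suc_imp_Ck: "Ck (Suc n) f \<Longrightarrow> Ck n f"
proof (induction n arbitrary: f)
  case 0
  then show ?case
    by (auto intro: differentiable_imp_continuous_on
        simp: differentiable_on_def differentiable_at_withinI)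
qed simp

lemma Ck_const: "Ck n (\<lambda>z. c)"
proof (induction n arbitrary: c)
  case (Suc n)
  have "partial i (\<lambda>z. c) = (\<lambda>z. 0)" for i by (rule ext) (rule partial_const)
  with Suc show ?case by simp
qed simp

lemma Ck_vec_nth: "Ck n (\<lambda>z. z$j)"
proof (cases n)
  case 0
  then show ?thesis by (simp add: continuous_on_component continuous_on_id)
next
  case (Suc m)
  have "partial i (\<lambda>z. z$j) = (\<lambda>z. if j = i then 1 else 0)" for i
    by (rule ext) (rule partial_vec_nth)
  with Suc Ck_const show ?thesis
    by (auto simp: differentiable_def intro: has_derivative_vec_nth_at)
qed

lemma Ck_add: "Ck n f \<Longrightarrow> Ck n g \<Longrightarrow> Ck n (\<lambda>z. f z + g z)"
proof (induction n arbitrary: f g)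
  case (Suc n)
  have "partial i (\<lambda>z. f z + g z) = (\<lambda>z. partial i f z + partial i g z)" for i
    using Suc.prems by (intro ext partial_add) auto
  with Suc show ?case by auto
qed (auto intro: continuous_intros)

lemma Ck_cmult: "Ck n f \<Longrightarrow> Ck n (\<lambda>z. c * f z)"
proof (induction n arbitrary: f)
  case (Suc n)
  have "partial i (\<lambda>z. c * f z) = (\<lambda>z. c * partial i f z)" for i
    using Suc.prems by (intro ext partial_cmult) auto
  with Suc show ?case by auto
qed (auto intro: continuous_intros)

lemma Ck_mult: "Ck n f \<Longrightarrow> Ck n g \<Longrightarrow> Ck n (\<lambda>z. f z * g z)"
proof (induction n arbitrary: f g)
  case (Suc n)
  have "partial i (\<lambda>z. f z * g z) = (\<lambda>z. partial i f z * g z + f z * partial i g z)" for i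
    using Suc.prems by (intro ext partial_mult) auto
  moreover have "Ck n f" "Ck n g" using Suc.prems Ck_Suc_imp_Ck by auto
  ultimately show ?case using Suc by (auto intro!: Ck_add)
qed (auto intro: continuous_intros)

lemma smooth_const: "smooth (\<lambda>z. c)"
  by (simp add: smooth_def Ck_const)

lemma smooth_vec_nth: "smooth (\<lambda>z. z$j)"
  by (simp add: smooth_def Ck_vec_nth)

lemma smooth_add: "smooth f \<Longrightarrow> smooth g \<Longrightarrow> smooth (\<lambda>z. f z + g z)"
  by (simp add: smooth_def Ck_add)

lemma smooth_cmult: "smooth f \<Longrightarrow> smooth (\<lambda>z. c * f z)"
  by (simp add: smooth_def Ck_cmult)

lemma smooth_mult: "smooth f \<Longrightarrow> smooth g \<Longrightarrow> smooth (\<lambda>z. f z * g z)"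
  by (simp add: smooth_def Ck_mult)

lemma smooth_diff: "smooth f \<Longrightarrow> smooth g \<Longrightarrow> smooth (\<lambda>z. f z - g z)"
  using smooth_add[of f "\<lambda>z. (-1) * g z"] smooth_cmult[of g "-1"] by simp

lemma smooth_divide_const: "smooth f \<Longrightarrow> smooth (\<lambda>z. f z / c)"
  using smooth_cmult[of f "1/c"] by simp

lemma smooth_partial: "smooth f \<Longrightarrow> smooth (partial i f)"
  unfolding smooth_def by (metis Ck.simps(2))

lemma smooth_imp_differentiable: "smooth f \<Longrightarrow> f differentiable (at z)"
  unfolding smooth_def by (metis Ck.simps(2))

lemma smooth_partial_commute: "smooth f \<Longrightarrow> partial j (partial i f) z = partial i (partial j f) z"
  unfolding smooth_def by (intro partial_commute) (metis Ck.simps)+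

lemmas smooth_intros =
  smooth_const smooth_vec_nth smooth_add smooth_cmult smooth_mult smooth_diff
  smooth_divide_const smooth_partial

lemmas partial_simps =
  partial_add partial_diff partial_cmult partial_mult partial_const partial_vec_nth
  smooth_imp_differentiable smooth_intros

subsection \<open>The bracket of \<open>PiM k\<close>\<close>

lemma bracket_PiM:
  "bracket (PiM k) f g z =
      (z$3/k) * (partial 2 f z * partial 1 g z - partial 1 f z * partial 2 g z)
    + (partial 3 f z * partial 1 g z - partial 1 f z * partial 3 g z)"
  unfolding bracket_def grad_def PiM_def
  by (simp add: inner_vec_def matrix_vector_mult_def sum_3 algebra_simps)

lemma smooth_bracket_PiM: "smooth f \<Longrightarrow> smooth g \<Longrightarrow> smooth (bracket (PiM k) f g)"
  unfolding bracket_PiM by (intro smooth_intros)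

lemma partial_bracket_PiM:
  assumes "smooth g" "smooth h"
  shows "partial i (bracket (PiM k) g h) z =
    (if i = 3 then 1/k else 0) * (partial 2 g z * partial 1 h z - partial 1 g z * partial 2 h z)
    + (z$3/k) * (partial i (partial 2 g) z * partial 1 h z + partial 2 g z * partial i (partial 1 h) z
                - partial i (partial 1 g) z * partial 2 h z - partial 1 g z * partial i (partial 2 h) z)
    + (partial i (partial 3 g) z * partial 1 h z + partial 3 g z * partial i (partial 1 h) z
                - partial i (partial 1 g) z * partial 3 h z - partial 1 g z * partial i (partial 3 h) z)"
proof -
  have "partial i (\<lambda>z. z$3 / k) z = (if i = 3 then 1/k else 0)"
    using partial_cmult[of "\<lambda>z. z$3" z i "1/k"] smooth_vec_nth[THEN smooth_imp_differentiable]
    by (simp add: partial_vec_nth)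
  with assms show ?thesis
    unfolding bracket_PiM[abs_def]
    by (simp only: partial_simps) (simp add: algebra_simps)
qed

lemma jacobi_PiM:
  assumes "smooth f" "smooth g" "smooth h"
  shows "bracket (PiM k) f (bracket (PiM k) g h) z + bracket (PiM k) g (bracket (PiM k) h f) z
       + bracket (PiM k) h (bracket (PiM k) f g) z = 0"
proof -
  note mixed_partials =
    smooth_partial_commute[OF assms(1), of 2 1] smooth_partial_commute[OF assms(1), of 3 1]
    smooth_partial_commute[OF assms(1), of 3 2] smooth_partial_commute[OF assms(2), of 2 1]
    smooth_partial_commute[OF assms(2), of 3 1] smooth_partial_commute[OF assms(2), of 3 2]
    smooth_partial_commute[OF assms(3), of 2 1] smooth_partial_commute[OF assms(3), of 3 1]
    smooth_partial_commute[OF assms(3), of 3 2]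
  show ?thesis
    using assms
    by (simp only: bracket_PiM[of k _ "bracket (PiM k) _ _"] partial_bracket_PiM mixed_partials)
       (simp add: algebra_simps)
qed

lemma defines_poisson_bracket_PiM: "defines_poisson_bracket (PiM k)"
  unfolding defines_poisson_bracket_def
proof (intro allI impI conjI ext)
  fix f g h :: "real^3 \<Rightarrow> real" and a b :: real and z
  assume "smooth f \<and> smooth g \<and> smooth h"
  then have sf: "smooth f" and sg: "smooth g" and sh: "smooth h" by auto
  show "smooth (bracket (PiM k) f g)"
    using sf sg by (rule smooth_bracket_PiM)
  show "bracket (PiM k) (\<lambda>z. a * f z + b * g z) h z = a * bracket (PiM k) f h z + b * bracket (PiM k) g h z"
    using sf sg by (simp add: bracket_PiM partial_simps algebra_simps)
  show "bracket (PiM k) f (\<lambda>z. a * g z + b * h z) z = a * bracket (PiM k) f g z + b * bracket (PiM k) f h z"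
    using sg sh by (simp add: bracket_PiM partial_simps algebra_simps)
  show "bracket (PiM k) f g z = - bracket (PiM k) g f z"
    by (simp add: bracket_PiM algebra_simps)
  show "bracket (PiM k) f (\<lambda>z. g z * h z) z = bracket (PiM k) f g z * h z + g z * bracket (PiM k) f h z"
    using sg sh by (simp add: bracket_PiM partial_simps algebra_simps)
  show "bracket (PiM k) f (bracket (PiM k) g h) z + bracket (PiM k) g (bracket (PiM k) h f) z
      + bracket (PiM k) h (bracket (PiM k) f g) z = 0"
    using sf sg sh by (rule jacobi_PiM)
qed

lemma Htil_eq: "Htil c1 c2 k = (\<lambda>z. (-(k/(2*c1))) * (z$1 * z$1 + (c1/c2) * (z$2 * z$2)))"
  by (rule ext) (simp add: Htil_def power2_eq_square)

lemma Ctil_eq: "Ctil k = (\<lambda>z. z$2 - (1/(2*k)) * (z$3 * z$3))"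
  by (rule ext) (simp add: Ctil_def power2_eq_square)

lemma smooth_Htil: "smooth (Htil c1 c2 k)"
  unfolding Htil_eq by (intro smooth_intros)

lemma smooth_Ctil: "smooth (Ctil k)"
  unfolding Ctil_eq by (intro smooth_intros)

lemma grad_Htil:
  assumes "c1 \<noteq> 0"
  shows "grad (Htil c1 c2 k) z = vector [-(k/c1) * z$1, -(k/c2) * z$2, 0]"
  using assms unfolding grad_def Htil_eq
  by (simp only: partial_simps) (simp add: vec_eq_iff forall_3 field_simps)

lemma partial_Ctil: "partial i (Ctil k) z = (if i = 2 then 1 else if i = 3 then - z$3 / k else 0)"
  unfolding Ctil_eq by (simp only: partial_simps) (auto simp: field_simps)

lemma sysF_eq_PiM_grad_Htil:
  assumes "c1 \<noteq> 0" "k \<noteq> 0"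
  shows "sysF c1 c2 k z = PiM k z *v grad (Htil c1 c2 k) z"
  using assms
  by (simp add: grad_Htil sysF_def PiM_def vec_eq_iff forall_3 matrix_vector_mult_def sum_3 field_simps)

lemma bracket_PiM_Ctil: "bracket (PiM k) (Ctil k) f z = 0"
  by (simp add: bracket_PiM partial_Ctil)

theorem proposition5p4:
  fixes c1 c2 k :: real
  assumes "c1 > 0" and "c2 > 0" and "k \<noteq> 0"
  shows "defines_poisson_bracket (PiM k)
       \<and> smooth (Htil c1 c2 k) \<and> smooth (Ctil k)
       \<and> (\<forall>z. sysF c1 c2 k z = PiM k z *v grad (Htil c1 c2 k) z)
       \<and> (\<forall>f. smooth f \<longrightarrow> (\<forall>z. bracket (PiM k) (Ctil k) f z = 0))"
  using assms defines_poisson_bracket_PiM smooth_Htil smooth_Ctil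
    sysF_eq_PiM_grad_Htil[of c1 k c2] bracket_PiM_Ctil
  by blast

end
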